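(* Let $(u,\rho)$ be a smooth solution on $[0,T)$ of the CH2 system on $S_1=\mathbb{R}/2\pi\mathbb{Z}$ (coordinate $\theta$) $$\partial_t m+u\,\partial_\theta m+2m\,\partial_\theta u=-\rho\,\partial_\theta\rho,\qquad m=u-\tfrac14\partial_{\theta\theta}u,\qquad \partial_t\rho+\partial_\theta(\rho u)=0 .$$ Let $N=S_1\times\mathbb{R}_{>0}\times S_1\times S_1$ with coordinates $(\theta,r,y,z)$ (the second circle being $\mathbb{R}/\mathbb{Z}$ in $y$) and metric $$h=r^2(\mathrm{d}\theta)^2+(\mathrm{d}r)^2+r^2(\mathrm{d}y)^2+r^{-10}(\mathrm{d}z)^2 ,$$ and define $$v(t,\theta,r,y,z)=u(t,\theta)\,\partial_\theta+\rho(t,\theta)\,\partial_y+\tfrac{r}{2}\,\partial_\theta u(t,\theta)\,\partial_r .$$ Then there exists a pressure $p$ on $[0,T)\times N$ such that $\partial_t v+\nabla_v v=-\nabla p$ and $\operatorname{div}_h v=0$, i.e. $v$ solves the incompressible Euler equation on $(N,h)$.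
   Context: $\nabla$ is the Levi-Civita connection of $h$, $\nabla p$ the $h$-gradient, $\operatorname{div}_h$ the divergence with respect to the Riemannian volume form of $h$. *)

theory Defs
  imports "HOL-Analysis.Analysis"
begin

text \<open>Coordinate calculus on subsets of R^n (real^'n).  Partial derivatives are
  taken along coordinate lines, relative to the set S (one-sided at boundary points).\<close>

definition has_partial :: "(real^'n) set \<Rightarrow> 'n \<Rightarrow> (real^'n \<Rightarrow> real) \<Rightarrow> real^'n \<Rightarrow> bool" where
  "has_partial S i f x \<longleftrightarrow>
     (\<exists>d. ((\<lambda>s. f (x + s *\<^sub>R axis i 1)) has_real_derivative d)
            (at 0 within {s. x + s *\<^sub>R axis i 1 \<in> S}))"

definition partial :: "(real^'n) set \<Rightarrow> 'n \<Rightarrow> (real^'n \<Rightarrow> real) \<Rightarrow> real^'n \<Rightarrow> real" where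
  "partial S i f x =
     (THE d. ((\<lambda>s. f (x + s *\<^sub>R axis i 1)) has_real_derivative d)
            (at 0 within {s. x + s *\<^sub>R axis i 1 \<in> S}))"

fun Ck :: "nat \<Rightarrow> (real^'n) set \<Rightarrow> (real^'n \<Rightarrow> real) \<Rightarrow> bool" where
  "Ck 0 S f = continuous_on S f"
| "Ck (Suc k) S f = (continuous_on S f \<and> (\<forall>i. \<forall>x\<in>S. has_partial S i f x)
                      \<and> (\<forall>i. Ck k S (partial S i f)))"

definition smooth_on :: "(real^'n) set \<Rightarrow> (real^'n \<Rightarrow> real) \<Rightarrow> bool" where
  "smooth_on S f \<longleftrightarrow> (\<forall>k. Ck k S f)"

text \<open>Riemannian geometry in a single coordinate chart, for a metric given by its
  coordinate matrix g(x).\<close>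

definition christoffel :: "(real^'n) set \<Rightarrow> (real^'n \<Rightarrow> real^'n^'n) \<Rightarrow> real^'n \<Rightarrow> 'n \<Rightarrow> 'n \<Rightarrow> 'n \<Rightarrow> real" where
  "christoffel U g x k i j =
     (1/2) * (\<Sum>l\<in>UNIV. matrix_inv (g x) $ k $ l *
        (partial U i (\<lambda>y. g y $ j $ l) x + partial U j (\<lambda>y. g y $ i $ l) x
         - partial U l (\<lambda>y. g y $ i $ j) x))"

definition cov_deriv :: "(real^'n) set \<Rightarrow> (real^'n \<Rightarrow> real^'n^'n) \<Rightarrow> (real^'n \<Rightarrow> real^'n)
                         \<Rightarrow> (real^'n \<Rightarrow> real^'n) \<Rightarrow> real^'n \<Rightarrow> real^'n" where
  "cov_deriv U g V W x = (\<chi> k. (\<Sum>i\<in>UNIV. V x $ i * partial U i (\<lambda>y. W y $ k) x)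
      + (\<Sum>i\<in>UNIV. \<Sum>j\<in>UNIV. christoffel U g x k i j * V x $ i * W x $ j))"

definition grad :: "(real^'n) set \<Rightarrow> (real^'n \<Rightarrow> real^'n^'n) \<Rightarrow> (real^'n \<Rightarrow> real) \<Rightarrow> real^'n \<Rightarrow> real^'n" where
  "grad U g p x = matrix_inv (g x) *v (\<chi> l. partial U l p x)"

definition divg :: "(real^'n) set \<Rightarrow> (real^'n \<Rightarrow> real^'n^'n) \<Rightarrow> (real^'n \<Rightarrow> real^'n) \<Rightarrow> real^'n \<Rightarrow> real" where
  "divg U g V x = (1 / sqrt (det (g x))) *
      (\<Sum>i\<in>UNIV. partial U i (\<lambda>y. sqrt (det (g y)) * V y $ i) x)"

text \<open>The CH2 system.  (t,theta) is packed as a point of real^2: x$1 = t, x$2 = theta.\<close>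

definition CH2_dom :: "real \<Rightarrow> (real^2) set" where
  "CH2_dom T = {x. 0 \<le> x$1 \<and> x$1 < T}"

definition CH2_solution :: "real \<Rightarrow> (real \<Rightarrow> real \<Rightarrow> real) \<Rightarrow> (real \<Rightarrow> real \<Rightarrow> real) \<Rightarrow> bool" where
  "CH2_solution T u \<rho> \<longleftrightarrow>
    (let S = CH2_dom T; U = (\<lambda>x::real^2. u (x$1) (x$2)); R = (\<lambda>x::real^2. \<rho> (x$1) (x$2));
         M = (\<lambda>x. U x - 1/4 * partial S 2 (partial S 2 U) x) in
     smooth_on S U \<and> smooth_on S R \<and>
     (\<forall>t \<theta>. 0 \<le> t \<and> t < T \<longrightarrow> u t (\<theta> + 2*pi) = u t \<theta> \<and> \<rho> t (\<theta> + 2*pi) = \<rho> t \<theta>) \<and>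
     (\<forall>x\<in>S. partial S 1 M x + U x * partial S 2 M x + 2 * M x * partial S 2 U x
              = - R x * partial S 2 R x) \<and>
     (\<forall>x\<in>S. partial S 1 R x + partial S 2 (\<lambda>y. R y * U y) x = 0))"

text \<open>The manifold N in coordinates x = (theta, r, y, z) = (x$1, x$2, x$3, x$4),
  r > 0, with periodicities 2pi in theta, 1 in y, 2pi in z.\<close>

definition N_dom :: "(real^4) set" where
  "N_dom = {x. 0 < x$2}"

definition h_metric :: "real^4 \<Rightarrow> real^4^4" where
  "h_metric x = (\<chi> i j. if i = j then
       (if i = 1 then (x$2)^2 else if i = 2 then 1 else if i = 3 then (x$2)^2
        else inverse ((x$2)^10)) else 0)"

definition N_periodic :: "(real^4 \<Rightarrow> real) \<Rightarrow> bool" where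
  "N_periodic f \<longleftrightarrow> (\<forall>x\<in>N_dom. f (x + (2*pi) *\<^sub>R axis 1 1) = f x \<and> f (x + axis 3 1) = f x
                          \<and> f (x + (2*pi) *\<^sub>R axis 4 1) = f x)"

definition CH2_lift :: "real \<Rightarrow> (real \<Rightarrow> real \<Rightarrow> real) \<Rightarrow> (real \<Rightarrow> real \<Rightarrow> real)
                         \<Rightarrow> real \<Rightarrow> real^4 \<Rightarrow> real^4" where
  "CH2_lift T u \<rho> t x = (\<chi> k.
      if k = 1 then u t (x$1)
      else if k = 2 then x$2 / 2 * partial (CH2_dom T) 2 (\<lambda>w::real^2. u (w$1) (w$2)) (vector [t, x$1])
      else if k = 3 then \<rho> t (x$1)
      else 0)"

end

theory Submission
  imports Defs
begin

text \<open>
  In the chart (\<theta>, r, y, z) the metric h is diagonal with coefficients depending on r alone, so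
  the only nonzero Christoffel symbols carry an index r, and every term of the Euler equation for
  the lifted field v has the separable form c r^k a(t, \<theta>).  The pressure
  p = -(r^2/4) (u_t\<theta> + u u_\<theta>\<theta> + u_\<theta>^2/2 - 2 u^2 - 2 \<rho>^2)
  makes the r-component hold identically.  By the CH2 momentum equation and the symmetry of mixed
  partial derivatives, the \<theta>-derivative of its angular profile is 4 u_t + 8 u u_\<theta>, which is
  exactly what the \<theta>-component requires; the y-component is the continuity equation for \<rho>.
  Incompressibility follows from sqrt (det h) = r^-3: the \<theta>-flux r^-3 u and the r-flux
  r^-3 (r/2) u_\<theta> have cancelling derivatives.
\<close>

section \<open>Coordinate partial derivatives\<close>

lemma has_partialI:
  "((\<lambda>s. f (x + s *\<^sub>R axis i 1)) has_real_derivative d) (at 0 within {s. x + s *\<^sub>R axis i 1 \<in> S})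
   \<Longrightarrow> has_partial S i f x"
  unfolding has_partial_def by blast

lemma partial_eqI:
  assumes "((\<lambda>s. f (x + s *\<^sub>R axis i 1)) has_real_derivative d) (at 0 within {s. x + s *\<^sub>R axis i 1 \<in> S})"
    and "\<not> trivial_limit (at (0::real) within {s. x + s *\<^sub>R axis i 1 \<in> S})"
  shows "partial S i f x = d"
  unfolding partial_def
proof (rule the_equality)
  fix d' assume "((\<lambda>s. f (x + s *\<^sub>R axis i 1)) has_real_derivative d') (at 0 within {s. x + s *\<^sub>R axis i 1 \<in> S})"
  with assms show "d' = d"
    unfolding has_field_derivative_iff using tendsto_unique by blast
qed (rule assms(1))

lemma has_real_derivative_cong_at_0:
  assumes "0 \<in> A" "\<And>s. s \<in> A \<Longrightarrow> F s = G s"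
  shows "(F has_real_derivative d) (at 0 within A) \<longleftrightarrow> (G has_real_derivative d) (at 0 within A)"
  using assms unfolding has_field_derivative_def by (metis has_derivative_transform)

lemma partial_cong_lines:
  assumes "{s. x + s *\<^sub>R axis i 1 \<in> S} = {s. y + s *\<^sub>R axis i 1 \<in> S}" "x \<in> S"
    and "\<And>s. x + s *\<^sub>R axis i 1 \<in> S \<Longrightarrow> f (x + s *\<^sub>R axis i 1) = g (y + s *\<^sub>R axis i 1)"
  shows "partial S i f x = partial S i g y" "has_partial S i f x = has_partial S i g y"
proof -
  have "0 \<in> {s. x + s *\<^sub>R axis i 1 \<in> S}" using assms(2) by simp
  then have "((\<lambda>s. f (x + s *\<^sub>R axis i 1)) has_real_derivative d) (at 0 within {s. x + s *\<^sub>R axis i 1 \<in> S})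
     \<longleftrightarrow> ((\<lambda>s. g (y + s *\<^sub>R axis i 1)) has_real_derivative d) (at 0 within {s. x + s *\<^sub>R axis i 1 \<in> S})"
    for d
    by (rule has_real_derivative_cong_at_0) (use assms(3) in simp)
  then have "((\<lambda>s. f (x + s *\<^sub>R axis i 1)) has_real_derivative d) (at 0 within {s. x + s *\<^sub>R axis i 1 \<in> S})
     \<longleftrightarrow> ((\<lambda>s. g (y + s *\<^sub>R axis i 1)) has_real_derivative d) (at 0 within {s. y + s *\<^sub>R axis i 1 \<in> S})"
    for d
    by (simp only: assms(1)[symmetric])
  then show "partial S i f x = partial S i g y" "has_partial S i f x = has_partial S i g y"
    unfolding partial_def has_partial_def by simp_all
qed

lemma partial_cong:
  assumes "x \<in> S" "\<And>y. y \<in> S \<Longrightarrow> f y = g y"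
  shows "partial S i f x = partial S i g x" "has_partial S i f x = has_partial S i g x"
  by (rule partial_cong_lines[OF refl assms(1) assms(2)], assumption)+

lemma Ck_cong: "(\<And>y. y \<in> S \<Longrightarrow> f y = g y) \<Longrightarrow> Ck k S f = Ck k S g"
proof (induction k arbitrary: f g)
  case 0
  have "continuous_on S f = continuous_on S g" by (rule continuous_on_cong[OF refl]) (rule 0)
  then show ?case by (simp only: Ck.simps(1))
next
  case (Suc k)
  have "continuous_on S f = continuous_on S g" by (rule continuous_on_cong[OF refl]) (rule Suc.prems)
  moreover have "(\<forall>i. \<forall>x\<in>S. has_partial S i f x) = (\<forall>i. \<forall>x\<in>S. has_partial S i g x)"
  proof -
    have "has_partial S i f x = has_partial S i g x" if "x \<in> S" for i x
      by (rule partial_cong(2)[OF that Suc.prems])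
    then show ?thesis by (simp cong: ball_cong)
  qed
  moreover have "Ck k S (partial S i f) = Ck k S (partial S i g)" for i
    by (rule Suc.IH) (rule partial_cong(1)[OF _ Suc.prems])
  ultimately show ?case by (simp only: Ck.simps)
qed

lemma smooth_on_imp_continuous_on: "smooth_on S f \<Longrightarrow> continuous_on S f"
  unfolding smooth_on_def using Ck.simps(1) by blast

lemma smooth_on_has_partial: "smooth_on S f \<Longrightarrow> x \<in> S \<Longrightarrow> has_partial S i f x"
  unfolding smooth_on_def using Ck.simps(2) by blast

lemma smooth_on_partial: "smooth_on S f \<Longrightarrow> smooth_on S (partial S i f)"
  unfolding smooth_on_def using Ck.simps(2) by blast

lemma has_partial_imp_has_real_derivative:
  assumes "\<not> trivial_limit (at (0::real) within {s. x + s *\<^sub>R axis i 1 \<in> S})" "has_partial S i f x"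
  shows "((\<lambda>s. f (x + s *\<^sub>R axis i 1)) has_real_derivative partial S i f x)
           (at 0 within {s. x + s *\<^sub>R axis i 1 \<in> S})"
proof -
  obtain d where "((\<lambda>s. f (x + s *\<^sub>R axis i 1)) has_real_derivative d) (at 0 within {s. x + s *\<^sub>R axis i 1 \<in> S})"
    using assms(2) unfolding has_partial_def by blast
  moreover from this have "partial S i f x = d" by (rule partial_eqI[OF _ assms(1)])
  ultimately show ?thesis by simp
qed

lemma partial_diff_scaled:
  assumes "\<not> trivial_limit (at (0::real) within {s. x + s *\<^sub>R axis i 1 \<in> S})"
    and "has_partial S i f x" "has_partial S i g x"
  shows "partial S i (\<lambda>y. f y - c * g y) x = partial S i f x - c * partial S i g x"
  by (rule partial_eqI[OF _ assms(1)])
     (intro DERIV_diff DERIV_cmult has_partial_imp_has_real_derivative assms)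

lemma partial_mult:
  assumes "\<not> trivial_limit (at (0::real) within {s. x + s *\<^sub>R axis i 1 \<in> S})"
    and "has_partial S i f x" "has_partial S i g x"
  shows "partial S i (\<lambda>y. f y * g y) x = partial S i f x * g x + f x * partial S i g x"
proof (rule partial_eqI[OF _ assms(1)])
  show "((\<lambda>s. f (x + s *\<^sub>R axis i 1) * g (x + s *\<^sub>R axis i 1)) has_real_derivative
      partial S i f x * g x + f x * partial S i g x) (at 0 within {s. x + s *\<^sub>R axis i 1 \<in> S})"
    using DERIV_mult[OF has_partial_imp_has_real_derivative[OF assms(1,2)]
        has_partial_imp_has_real_derivative[OF assms(1,3)]] by (simp add: mult.commute)
qed


section \<open>Slices of the space-time domain\<close>

lemma vector2_add_axis:
  "vector[t,\<theta>] + s *\<^sub>R axis 1 1 = (vector[t+s, \<theta>] :: real^2)"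
  "vector[t,\<theta>] + s *\<^sub>R axis 2 1 = (vector[t, \<theta>+s] :: real^2)"
  by (simp_all add: vec_eq_iff forall_2 axis_def)

lemma vector2_in_CH2_dom [simp]: "(vector[t,\<theta>] :: real^2) \<in> CH2_dom T \<longleftrightarrow> 0 \<le> t \<and> t < T"
  by (simp add: CH2_dom_def)

lemma CH2_dom_space_line:
  "0 \<le> t \<Longrightarrow> t < T \<Longrightarrow> {s. vector[t,\<theta>] + s *\<^sub>R axis 2 1 \<in> CH2_dom T} = UNIV"
  by (simp add: vector2_add_axis)

lemma CH2_dom_time_line: "{s. vector[t,\<theta>] + s *\<^sub>R axis 1 1 \<in> CH2_dom T} = {-t..<T-t}"
  by (auto simp: vector2_add_axis)

lemma has_real_derivative_time_slice_iff:
  fixes F :: "real^2 \<Rightarrow> real"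
  shows "((\<lambda>s. F (vector[t,\<theta>] + s *\<^sub>R axis 1 1)) has_real_derivative d)
      (at 0 within {s. vector[t,\<theta>] + s *\<^sub>R axis 1 1 \<in> CH2_dom T})
   \<longleftrightarrow> ((\<lambda>s. F (vector[s,\<theta>])) has_real_derivative d) (at t within {0..<T})"
proof -
  have "(+) t ` {-t..<T-t} = {0..<T}" by simp
  then show ?thesis
    unfolding CH2_dom_time_line unfolding vector2_add_axis
    using DERIV_at_within_shift[of "\<lambda>s. F (vector[s,\<theta>])" d t 0 "{-t..<T-t}"] by simp
qed

lemma CH2_dom_time_line_nontrivial:
  "0 \<le> t \<Longrightarrow> t < T \<Longrightarrow> \<not> trivial_limit (at (0::real) within {s. vector[t,\<theta>] + s *\<^sub>R axis 1 1 \<in> CH2_dom T})"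
  unfolding CH2_dom_time_line trivial_limit_within
  using islimpt_subset[of 0 "{0<..<T-t}"] islimpt_greaterThanLessThan1[of 0 "T-t"] by auto

lemma partial_CH2_dom_space_eqI:
  fixes F :: "real^2 \<Rightarrow> real"
  assumes "0 \<le> t" "t < T" "DERIV (\<lambda>\<tau>. F (vector[t,\<tau>])) \<theta> :> d"
  shows "partial (CH2_dom T) 2 F (vector[t,\<theta>]) = d"
proof (rule partial_eqI)
  have "((\<lambda>s. F (vector[t, \<theta> + s])) has_real_derivative d) (at 0)"
    using assms(3) DERIV_shift[of "\<lambda>\<tau>. F (vector[t,\<tau>])" d 0 \<theta>] by (simp add: add.commute)
  then show "((\<lambda>s. F (vector[t,\<theta>] + s *\<^sub>R axis 2 1)) has_real_derivative d)
       (at 0 within {s. vector[t,\<theta>] + s *\<^sub>R axis 2 1 \<in> CH2_dom T})"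
    using assms(1,2) by (simp add: CH2_dom_space_line vector2_add_axis)
qed (use assms(1,2) in \<open>simp add: CH2_dom_space_line\<close>)

lemma DERIV_partial_CH2_dom_space:
  fixes F :: "real^2 \<Rightarrow> real"
  assumes "0 \<le> t" "t < T" "has_partial (CH2_dom T) 2 F (vector[t,\<theta>])"
  shows "DERIV (\<lambda>\<tau>. F (vector[t,\<tau>])) \<theta> :> partial (CH2_dom T) 2 F (vector[t,\<theta>])"
proof -
  obtain d where "((\<lambda>s. F (vector[t,\<theta>] + s *\<^sub>R axis 2 1)) has_real_derivative d)
       (at 0 within {s. vector[t,\<theta>] + s *\<^sub>R axis 2 1 \<in> CH2_dom T})"
    using assms(3) unfolding has_partial_def by blast
  then have "((\<lambda>s. F (vector[t, \<theta> + s])) has_real_derivative d) (at 0)"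
    using assms(1,2) by (simp add: CH2_dom_space_line vector2_add_axis)
  then have "DERIV (\<lambda>\<tau>. F (vector[t,\<tau>])) \<theta> :> d"
    using DERIV_shift[of "\<lambda>\<tau>. F (vector[t,\<tau>])" d 0 \<theta>] by (simp add: add.commute)
  moreover from this have "partial (CH2_dom T) 2 F (vector[t,\<theta>]) = d"
    by (rule partial_CH2_dom_space_eqI[OF assms(1,2)])
  ultimately show ?thesis by simp
qed

lemma partial_CH2_dom_time_eqI:
  fixes F :: "real^2 \<Rightarrow> real"
  assumes "0 \<le> t" "t < T" "((\<lambda>s. F (vector[s,\<theta>])) has_real_derivative d) (at t within {0..<T})"
  shows "partial (CH2_dom T) 1 F (vector[t,\<theta>]) = d"
  by (rule partial_eqI)
     (use assms CH2_dom_time_line_nontrivial in \<open>simp_all add: has_real_derivative_time_slice_iff\<close>)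

lemma has_real_derivative_partial_CH2_dom_time:
  fixes F :: "real^2 \<Rightarrow> real"
  assumes "0 \<le> t" "t < T" "has_partial (CH2_dom T) 1 F (vector[t,\<theta>])"
  shows "((\<lambda>s. F (vector[s,\<theta>])) has_real_derivative partial (CH2_dom T) 1 F (vector[t,\<theta>]))
           (at t within {0..<T})"
proof -
  obtain d where "((\<lambda>s. F (vector[s,\<theta>])) has_real_derivative d) (at t within {0..<T})"
    using assms(3) unfolding has_partial_def has_real_derivative_time_slice_iff by blast
  moreover from this have "partial (CH2_dom T) 1 F (vector[t,\<theta>]) = d"
    by (rule partial_CH2_dom_time_eqI[OF assms(1,2)])
  ultimately show ?thesis by simp
qed

lemma smooth_on_CH2_dom_DERIV_space:
  fixes F :: "real^2 \<Rightarrow> real"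
  shows "smooth_on (CH2_dom T) F \<Longrightarrow> 0 \<le> t \<Longrightarrow> t < T
    \<Longrightarrow> DERIV (\<lambda>\<tau>. F (vector[t,\<tau>])) \<theta> :> partial (CH2_dom T) 2 F (vector[t,\<theta>])"
  by (simp add: DERIV_partial_CH2_dom_space smooth_on_has_partial)

lemma smooth_on_CH2_dom_DERIV_time:
  fixes F :: "real^2 \<Rightarrow> real"
  shows "smooth_on (CH2_dom T) F \<Longrightarrow> 0 \<le> t \<Longrightarrow> t < T
    \<Longrightarrow> ((\<lambda>s. F (vector[s,\<theta>])) has_real_derivative partial (CH2_dom T) 1 F (vector[t,\<theta>]))
          (at t within {0..<T})"
  by (simp add: has_real_derivative_partial_CH2_dom_time smooth_on_has_partial)

lemma CH2_dom_line_nontrivial: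
  assumes "x \<in> CH2_dom T"
  shows "\<not> trivial_limit (at (0::real) within {s. x + s *\<^sub>R axis i 1 \<in> CH2_dom T})"
proof -
  have x: "x = vector[x$1, x$2]" "0 \<le> x$1" "x$1 < T"
    using assms by (simp_all add: vec_eq_iff forall_2 CH2_dom_def)
  consider "i = 1" | "i = 2" using exhaust_2 by blast
  then show ?thesis
  proof cases
    case 1
    then show ?thesis using CH2_dom_time_line_nontrivial[OF x(2,3)] x(1) by metis
  next
    case 2
    then have "{s. x + s *\<^sub>R axis i 1 \<in> CH2_dom T} = UNIV"
      using CH2_dom_space_line[OF x(2,3)] x(1) by metis
    then show ?thesis by simp
  qed
qed


section \<open>Separable functions on N\<close>

lemma open_N_dom_line: "open {s. x + s *\<^sub>R axis i 1 \<in> N_dom}"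
  unfolding N_dom_def mem_Collect_eq by (intro open_Collect_less continuous_intros)

lemma partial_N_dom_eqI:
  assumes "x \<in> N_dom" "((\<lambda>s. F (x + s *\<^sub>R axis i 1)) has_real_derivative d) (at 0)"
  shows "partial N_dom i F x = d" "has_partial N_dom i F x"
proof -
  have "at (0::real) within {s. x + s *\<^sub>R axis i 1 \<in> N_dom} = at 0"
    using assms(1) by (intro at_within_open open_N_dom_line) simp
  then show "partial N_dom i F x = d" "has_partial N_dom i F x"
    using assms(2) by (simp_all add: partial_eqI has_partialI)
qed

lemma partial_N_dom_separable:
  assumes x: "x \<in> N_dom" and F: "\<And>y. y \<in> N_dom \<Longrightarrow> F y = q (y$2) * g (y$1)"
    and g: "DERIV g (x$1) :> g'" and q: "DERIV q (x$2) :> q'"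
  shows "partial N_dom i F x = (if i = 1 then q (x$2) * g' else if i = 2 then q' * g (x$1) else 0)"
    "has_partial N_dom i F x"
proof -
  let ?G = "\<lambda>y. q (y$2) * g (y$1)"
  have "((\<lambda>s. ?G (x + s *\<^sub>R axis i 1)) has_real_derivative
      (if i = 1 then q (x$2) * g' else if i = 2 then q' * g (x$1) else 0)) (at 0)"
  proof -
    have g0: "((\<lambda>s. g (x$1 + s)) has_real_derivative g') (at 0)"
      and q0: "((\<lambda>s. q (x$2 + s)) has_real_derivative q') (at 0)"
      using DERIV_shift[of g g' 0 "x$1"] DERIV_shift[of q q' 0 "x$2"] g q by (simp_all add: add.commute)
    consider "i = 1" | "i = 2" | "i \<noteq> 1" "i \<noteq> 2" by blast
    then show ?thesis
      by cases (use DERIV_cmult[OF g0, of "q (x$2)"] DERIV_cmult_right[OF q0, of "g (x$1)"] in \<open>simp_all add: axis_def\<close>)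
  qed
  then show "partial N_dom i F x = (if i = 1 then q (x$2) * g' else if i = 2 then q' * g (x$1) else 0)"
    "has_partial N_dom i F x"
    using partial_N_dom_eqI[OF x] partial_cong[OF x F] by simp_all
qed

section \<open>Smooth functions of one real variable\<close>

fun Ck_real :: "nat \<Rightarrow> (real \<Rightarrow> real) \<Rightarrow> bool" where
  "Ck_real 0 a = continuous_on UNIV a"
| "Ck_real (Suc k) a = ((\<forall>\<theta>. a differentiable (at \<theta>)) \<and> Ck_real k (deriv a))"

definition smooth_real :: "(real \<Rightarrow> real) \<Rightarrow> bool" where
  "smooth_real a \<longleftrightarrow> (\<forall>k. Ck_real k a)"

lemma continuous_on_UNIV_if_differentiable:
  "(\<forall>\<theta>. (a::real \<Rightarrow> real) differentiable (at \<theta>)) \<Longrightarrow> continuous_on UNIV a"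
  by (meson continuous_at_imp_continuous_on differentiable_imp_continuous_within)

lemma Ck_real_SucD: "Ck_real (Suc k) a \<Longrightarrow> Ck_real k a"
  by (induction k arbitrary: a) (simp_all add: continuous_on_UNIV_if_differentiable)

lemma Ck_real_imp_continuous_on: "Ck_real k a \<Longrightarrow> continuous_on UNIV a"
  by (cases k) (simp_all add: continuous_on_UNIV_if_differentiable)

lemma Ck_real_DERIV: "Ck_real (Suc k) a \<Longrightarrow> DERIV a \<theta> :> deriv a \<theta>"
  by (simp add: DERIV_deriv_iff_real_differentiable)

lemma Ck_real_const: "Ck_real k (\<lambda>_. c)"
proof (induction k arbitrary: c)
  case (Suc k)
  have "deriv (\<lambda>_. c) = (\<lambda>_. 0)" by (rule ext, rule DERIV_imp_deriv) simp
  then show ?case using Suc by simp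
qed simp

lemma Ck_real_add: "Ck_real k a \<Longrightarrow> Ck_real k b \<Longrightarrow> Ck_real k (\<lambda>\<theta>. a \<theta> + b \<theta>)"
proof (induction k arbitrary: a b)
  case (Suc k)
  have "deriv (\<lambda>\<theta>. a \<theta> + b \<theta>) = (\<lambda>\<theta>. deriv a \<theta> + deriv b \<theta>)"
    using Suc.prems by (intro ext DERIV_imp_deriv DERIV_add Ck_real_DERIV)
  then show ?case using Suc by auto
qed (simp add: continuous_on_add)

lemma Ck_real_mult: "Ck_real k a \<Longrightarrow> Ck_real k b \<Longrightarrow> Ck_real k (\<lambda>\<theta>. a \<theta> * b \<theta>)"
proof (induction k arbitrary: a b)
  case (Suc k)
  have "deriv (\<lambda>\<theta>. a \<theta> * b \<theta>) = (\<lambda>\<theta>. deriv a \<theta> * b \<theta> + a \<theta> * deriv b \<theta>)"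
    using Suc.prems by (intro ext DERIV_imp_deriv) (auto intro!: derivative_eq_intros Ck_real_DERIV)
  moreover have "Ck_real k (\<lambda>\<theta>. deriv a \<theta> * b \<theta> + a \<theta> * deriv b \<theta>)"
    using Suc.prems Ck_real_SucD by (intro Ck_real_add Suc.IH) auto
  ultimately show ?case using Suc.prems by auto
qed (simp add: continuous_on_mult)

lemma smooth_real_const: "smooth_real (\<lambda>_. c)"
  unfolding smooth_real_def using Ck_real_const by blast

lemma smooth_real_add: "smooth_real a \<Longrightarrow> smooth_real b \<Longrightarrow> smooth_real (\<lambda>\<theta>. a \<theta> + b \<theta>)"
  unfolding smooth_real_def using Ck_real_add by blast

lemma smooth_real_mult: "smooth_real a \<Longrightarrow> smooth_real b \<Longrightarrow> smooth_real (\<lambda>\<theta>. a \<theta> * b \<theta>)"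
  unfolding smooth_real_def using Ck_real_mult by blast

lemma smooth_real_diff: "smooth_real a \<Longrightarrow> smooth_real b \<Longrightarrow> smooth_real (\<lambda>\<theta>. a \<theta> - b \<theta>)"
  using smooth_real_add[of a "\<lambda>\<theta>. (-1) * b \<theta>"] smooth_real_mult[OF smooth_real_const, of b "-1"] by simp

lemma smooth_real_space_slice:
  fixes G :: "real^2 \<Rightarrow> real"
  assumes "smooth_on (CH2_dom T) G" "0 \<le> t" "t < T"
  shows "smooth_real (\<lambda>\<theta>. G (vector[t,\<theta>]))"
proof -
  have "Ck_real k (\<lambda>\<theta>. G (vector[t,\<theta>]))" if "smooth_on (CH2_dom T) G" for k G
    using that
  proof (induction k arbitrary: G)
    case 0
    have "\<forall>\<theta>. (\<lambda>\<theta>. G (vector[t,\<theta>])) differentiable (at \<theta>)"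
      using smooth_on_CH2_dom_DERIV_space[OF 0 assms(2,3)] real_differentiable_def by blast
    then show ?case by (simp add: continuous_on_UNIV_if_differentiable)
  next
    case (Suc k)
    have D: "DERIV (\<lambda>\<theta>. G (vector[t,\<theta>])) \<theta> :> partial (CH2_dom T) 2 G (vector[t,\<theta>])" for \<theta>
      using smooth_on_CH2_dom_DERIV_space[OF Suc.prems assms(2,3)] .
    then have "deriv (\<lambda>\<theta>. G (vector[t,\<theta>])) = (\<lambda>\<theta>. partial (CH2_dom T) 2 G (vector[t,\<theta>]))"
      by (intro ext DERIV_imp_deriv)
    then show ?case
      using Suc.IH[OF smooth_on_partial[OF Suc.prems]] D real_differentiable_def by auto
  qed
  then show ?thesis unfolding smooth_real_def using assms(1) by blast
qed

lemma Ck_N_dom_separable: "Ck_real k a \<Longrightarrow> Ck k N_dom (\<lambda>y. c * (y$2)^n * a (y$1))"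
proof (induction k arbitrary: c n a)
  case 0
  then show ?case using Ck_real_imp_continuous_on[OF 0]
    by (auto intro!: continuous_intros continuous_on_compose2[of UNIV a])
next
  case (Suc k)
  have da: "DERIV a \<theta> :> deriv a \<theta>" for \<theta>
    using Suc.prems by (rule Ck_real_DERIV)
  have dq: "DERIV (\<lambda>r. c * r^n) r :> c * (real n * r^(n-1))" for r
    by (auto intro!: derivative_eq_intros)
  note ps = partial_N_dom_separable[OF _ refl da dq]
  have "Ck k N_dom (partial N_dom i (\<lambda>y. c * (y$2)^n * a (y$1)))" for i
  proof -
    have a': "Ck_real k (deriv a)" and a: "Ck_real k a"
      using Suc.prems Ck_real_SucD by auto
    consider "i = 1" | "i = 2" | "i \<noteq> 1" "i \<noteq> 2" by blast
    then show ?thesis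
    proof cases
      case 1
      show ?thesis
        by (rule Ck_cong[THEN iffD2, OF _ Suc.IH[OF a', of c n]]) (simp add: ps(1) 1)
    next
      case 2
      show ?thesis
        by (rule Ck_cong[THEN iffD2, OF _ Suc.IH[OF a, of "c * real n" "n - 1"]]) (simp add: ps(1) 2)
    next
      case 3
      show ?thesis
        by (rule Ck_cong[THEN iffD2, OF _ Suc.IH[OF a, of 0 0]]) (simp add: ps(1) 3)
    qed
  qed
  moreover have "continuous_on N_dom (\<lambda>y. c * (y$2)^n * a (y$1))"
    using Ck_real_imp_continuous_on[OF Suc.prems]
    by (auto intro!: continuous_intros continuous_on_compose2[of UNIV a])
  ultimately show ?case using ps(2) by simp
qed

lemma smooth_on_N_dom_separable: "smooth_real a \<Longrightarrow> smooth_on N_dom (\<lambda>y. c * (y$2)^n * a (y$1))"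
  unfolding smooth_real_def smooth_on_def using Ck_N_dom_separable by blast

section \<open>Periodicity in the space variable\<close>

definition space_periodic :: "real \<Rightarrow> (real^2 \<Rightarrow> real) \<Rightarrow> bool" where
  "space_periodic T G \<longleftrightarrow> (\<forall>x\<in>CH2_dom T. G (x + (2*pi) *\<^sub>R axis 2 1) = G x)"

lemma space_periodic_partial:
  assumes "space_periodic T G"
  shows "space_periodic T (partial (CH2_dom T) i G)"
  unfolding space_periodic_def
proof
  fix x assume x: "x \<in> CH2_dom T"
  show "partial (CH2_dom T) i G (x + (2*pi) *\<^sub>R axis 2 1) = partial (CH2_dom T) i G x"
  proof (rule partial_cong_lines(1))
    fix s assume "x + (2*pi) *\<^sub>R axis 2 1 + s *\<^sub>R axis i 1 \<in> CH2_dom T"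
    then have "x + s *\<^sub>R axis i 1 \<in> CH2_dom T" by (simp add: CH2_dom_def axis_def)
    moreover have "x + (2*pi) *\<^sub>R axis 2 1 + s *\<^sub>R axis i 1 = (x + s *\<^sub>R axis i 1) + (2*pi) *\<^sub>R axis 2 1"
      by (simp add: algebra_simps)
    ultimately show "G (x + (2*pi) *\<^sub>R axis 2 1 + s *\<^sub>R axis i 1) = G (x + s *\<^sub>R axis i 1)"
      using assms unfolding space_periodic_def by (simp only:)
  qed (use x in \<open>simp_all add: CH2_dom_def axis_def\<close>)
qed

section \<open>Symmetry of mixed partial derivatives\<close>

lemma MVT_within_atLeastLessThan:
  fixes g :: "real \<Rightarrow> real"
  assumes "0 \<le> t" "0 < h" "t + h < T"
    and D: "\<And>s. t \<le> s \<Longrightarrow> s \<le> t + h \<Longrightarrow> (g has_real_derivative g' s) (at s within {0..<T})"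
  shows "\<exists>z. t < z \<and> z < t + h \<and> g (t + h) - g t = h * g' z"
proof -
  have cont: "continuous_on {t..t+h} g"
    unfolding continuous_on_eq_continuous_within
  proof
    fix s assume "s \<in> {t..t+h}"
    then have "continuous (at s within {0..<T}) g" by (intro DERIV_continuous[OF D]) auto
    moreover have "{t..t+h} \<subseteq> {0..<T}" using assms by auto
    ultimately show "continuous (at s within {t..t+h}) g" using continuous_within_subset by blast
  qed
  have der: "(g has_derivative (*) (g' s)) (at s)" if "t < s" "s < t + h" for s
  proof -
    have "s \<in> interior {0..<T}" using that assms by simp
    then have "DERIV g s :> g' s" using D[of s] that at_within_interior by fastforce
    then show ?thesis by (simp add: has_field_derivative_def)
  qed
  have "t < t + h" using assms(2) by simp
  then obtain z where "t < z" "z < t + h" "g (t + h) - g t = g' z * (t + h - t)"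
    by (rule mvt[OF _ cont der])
  then show ?thesis by (metis add_diff_cancel_left' mult.commute)
qed

lemma mixed_partials_CH2_dom_meet:
  fixes f :: "real^2 \<Rightarrow> real"
  assumes f: "smooth_on (CH2_dom T) f" and h: "0 \<le> t" "0 < h" "t + h < T"
  obtains z w z' w' where "t < z" "z < t + h" "\<theta> < w" "w < \<theta> + h"
    "t < z'" "z' < t + h" "\<theta> < w'" "w' < \<theta> + h"
    "partial (CH2_dom T) 2 (partial (CH2_dom T) 1 f) (vector[z,w])
       = partial (CH2_dom T) 1 (partial (CH2_dom T) 2 f) (vector[z',w'])"
proof -
  let ?D = "CH2_dom T"
  let ?f1 = "partial ?D 1 f" and ?f2 = "partial ?D 2 f"
  have s1: "smooth_on ?D ?f1" and s2: "smooth_on ?D ?f2"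
    using smooth_on_partial f by blast+
  have time: "((\<lambda>s. F (vector[s,b])) has_real_derivative partial ?D 1 F (vector[a,b])) (at a within {0..<T})"
    if "smooth_on ?D F" "t \<le> a" "a \<le> t + h" for F :: "real^2 \<Rightarrow> real" and a b
    using smooth_on_CH2_dom_DERIV_time[OF that(1)] that h by simp
  have space: "DERIV (\<lambda>\<tau>. F (vector[a,\<tau>])) b :> partial ?D 2 F (vector[a,b])"
    if "smooth_on ?D F" "t \<le> a" "a \<le> t + h" for F :: "real^2 \<Rightarrow> real" and a b
    using smooth_on_CH2_dom_DERIV_space[OF that(1)] that h by simp
  \<comment> \<open>the mean value theorem for the second difference of f over [t, t+h] \<times> [\<theta>, \<theta>+h], in either order\<close>
  obtain z where z: "t < z" "z < t + h"
    "(f (vector[t+h,\<theta>+h]) - f (vector[t+h,\<theta>])) - (f (vector[t,\<theta>+h]) - f (vector[t,\<theta>]))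
       = h * (?f1 (vector[z,\<theta>+h]) - ?f1 (vector[z,\<theta>]))"
    using MVT_within_atLeastLessThan[OF h, of "\<lambda>s. f (vector[s,\<theta>+h]) - f (vector[s,\<theta>])"
        "\<lambda>s. ?f1 (vector[s,\<theta>+h]) - ?f1 (vector[s,\<theta>])"]
    by (force intro!: DERIV_diff time[OF f])
  obtain w where w: "\<theta> < w" "w < \<theta> + h"
    "?f1 (vector[z,\<theta>+h]) - ?f1 (vector[z,\<theta>]) = h * partial ?D 2 ?f1 (vector[z,w])"
    using MVT2[of \<theta> "\<theta>+h" "\<lambda>\<tau>. ?f1 (vector[z,\<tau>])" "\<lambda>\<tau>. partial ?D 2 ?f1 (vector[z,\<tau>])"]
      space[OF s1] h z by force
  obtain w' where w': "\<theta> < w'" "w' < \<theta> + h"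
    "(f (vector[t+h,\<theta>+h]) - f (vector[t,\<theta>+h])) - (f (vector[t+h,\<theta>]) - f (vector[t,\<theta>]))
       = h * (?f2 (vector[t+h,w']) - ?f2 (vector[t,w']))"
    using MVT2[of \<theta> "\<theta>+h" "\<lambda>\<tau>. f (vector[t+h,\<tau>]) - f (vector[t,\<tau>])"
        "\<lambda>\<tau>. ?f2 (vector[t+h,\<tau>]) - ?f2 (vector[t,\<tau>])"]
      space[OF f] h by (force intro!: DERIV_diff)
  obtain z' where z': "t < z'" "z' < t + h"
    "?f2 (vector[t+h,w']) - ?f2 (vector[t,w']) = h * partial ?D 1 ?f2 (vector[z',w'])"
    using MVT_within_atLeastLessThan[OF h, of "\<lambda>s. ?f2 (vector[s,w'])" "\<lambda>s. partial ?D 1 ?f2 (vector[s,w'])"]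
      time[OF s2] by force
  have "h * (h * partial ?D 2 ?f1 (vector[z,w])) = h * (h * partial ?D 1 ?f2 (vector[z',w']))"
    using z(3) w(3) w'(3) z'(3) by (simp add: algebra_simps)
  then show thesis
    using that z(1,2) w(1,2) z'(1,2) w'(1,2) h(2) by simp
qed

lemma dist_vector2_le: "dist (vector[a,b] :: real^2) (vector[c,d]) \<le> \<bar>a - c\<bar> + \<bar>b - d\<bar>"
  using norm_le_l1_cart[of "vector[a,b] - (vector[c,d] :: real^2)"] by (simp add: dist_norm sum_2)

lemma partial_CH2_dom_commute:
  fixes f :: "real^2 \<Rightarrow> real"
  assumes f: "smooth_on (CH2_dom T) f" and t: "0 \<le> t" "t < T"
  shows "partial (CH2_dom T) 2 (partial (CH2_dom T) 1 f) (vector[t,\<theta>])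
       = partial (CH2_dom T) 1 (partial (CH2_dom T) 2 f) (vector[t,\<theta>])"
proof (rule ccontr)
  let ?D = "CH2_dom T" and ?x = "vector[t,\<theta>] :: real^2"
  define D21 where "D21 = partial ?D 2 (partial ?D 1 f)"
  define D12 where "D12 = partial ?D 1 (partial ?D 2 f)"
  assume "\<not> ?thesis"
  then have e: "\<bar>D21 ?x - D12 ?x\<bar> / 3 > 0" unfolding D21_def D12_def by simp
  have x: "?x \<in> ?D" using t by simp
  obtain d1 where d1: "d1 > 0" "\<And>y. y \<in> ?D \<Longrightarrow> dist y ?x < d1 \<Longrightarrow> \<bar>D21 y - D21 ?x\<bar> < \<bar>D21 ?x - D12 ?x\<bar> / 3"
    using smooth_on_imp_continuous_on[of ?D D21] f x e
    unfolding continuous_on_iff D21_def dist_real_def by (metis smooth_on_partial)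
  obtain d2 where d2: "d2 > 0" "\<And>y. y \<in> ?D \<Longrightarrow> dist y ?x < d2 \<Longrightarrow> \<bar>D12 y - D12 ?x\<bar> < \<bar>D21 ?x - D12 ?x\<bar> / 3"
    using smooth_on_imp_continuous_on[of ?D D12] f x e
    unfolding continuous_on_iff D12_def dist_real_def by (metis smooth_on_partial)
  define h where "h = min (min d1 d2) (T - t) / 3"
  have h: "0 < h" "t + h < T" "2 * h < d1" "2 * h < d2"
    using d1(1) d2(1) t unfolding h_def by (auto simp: min_def field_simps)
  obtain z w z' w' where zw: "t < z" "z < t + h" "\<theta> < w" "w < \<theta> + h"
    "t < z'" "z' < t + h" "\<theta> < w'" "w' < \<theta> + h" "D21 (vector[z,w]) = D12 (vector[z',w'])"
    using mixed_partials_CH2_dom_meet[OF f t(1) h(1,2)] unfolding D21_def D12_def by blast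
  have "dist (vector[z,w]) ?x < d1" "dist (vector[z',w']) ?x < d2"
    using dist_vector2_le[of z w t \<theta>] dist_vector2_le[of z' w' t \<theta>] zw h by auto
  moreover have "vector[z,w] \<in> ?D" "vector[z',w'] \<in> ?D"
    using zw h t by auto
  ultimately have "\<bar>D21 (vector[z,w]) - D21 ?x\<bar> < \<bar>D21 ?x - D12 ?x\<bar> / 3"
    and "\<bar>D12 (vector[z',w']) - D12 ?x\<bar> < \<bar>D21 ?x - D12 ?x\<bar> / 3"
    using d1(2) d2(2) by blast+
  then show False using zw(9) by (auto simp: abs_if split: if_split_asm)
qed

section \<open>The metric h\<close>

lemma matrix_inv_eqI:
  fixes A B :: "'a::semiring_1^'n^'n"
  assumes "A ** B = mat 1" "B ** A = mat 1"
  shows "matrix_inv A = B"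
proof -
  have inv: "matrix_inv A ** A = mat 1"
    unfolding matrix_inv_def by (rule someI2_ex) (use assms in blast)+
  have "matrix_inv A = matrix_inv A ** (A ** B)" using assms by (simp add: matrix_mul_rid)
  also have "\<dots> = (matrix_inv A ** A) ** B" by (simp add: matrix_mul_assoc)
  finally show ?thesis using inv by (simp add: matrix_mul_lid)
qed

lemma if_zero_mult: "(if P then a else 0) * b = (if P then a * b else (0::'a::mult_zero))"
  by simp

lemma matrix_inv_diagonal:
  fixes d :: "'n::finite \<Rightarrow> 'a::field"
  assumes "\<And>i. d i \<noteq> 0"
  shows "matrix_inv (\<chi> i j. if i = j then d i else 0) = (\<chi> i j. if i = j then inverse (d i) else 0)"
  by (rule matrix_inv_eqI) (simp_all add: matrix_matrix_mult_def mat_def vec_eq_iff if_zero_mult assms)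

definition h_diag :: "real \<Rightarrow> 4 \<Rightarrow> real" where
  "h_diag r i = (if i = 1 then r^2 else if i = 2 then 1 else if i = 3 then r^2 else inverse (r^10))"

definition h_diag_deriv :: "real \<Rightarrow> 4 \<Rightarrow> real" where
  "h_diag_deriv r i = (if i = 1 then 2*r else if i = 2 then 0 else if i = 3 then 2*r else -10 / r^11)"

lemma h_metric_diagonal: "h_metric x = (\<chi> i j. if i = j then h_diag (x$2) i else 0)"
  by (simp add: h_metric_def h_diag_def vec_eq_iff)

lemma matrix_inv_h_metric:
  "0 < x$2 \<Longrightarrow> matrix_inv (h_metric x) = (\<chi> i j. if i = j then inverse (h_diag (x$2) i) else 0)"
  unfolding h_metric_diagonal by (rule matrix_inv_diagonal) (simp add: h_diag_def)

lemma sqrt_det_h_metric: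
  assumes r: "0 < x$2"
  shows "sqrt (det (h_metric x)) = inverse ((x$2)^3)"
proof -
  have "det (h_metric x) = (\<Prod>i\<in>UNIV. h_diag (x$2) i)"
    unfolding h_metric_diagonal by (subst det_diagonal) simp_all
  also have "\<dots> = (x$2)^2 * (x$2)^2 * inverse ((x$2)^10)"
    unfolding UNIV_4 by (simp add: h_diag_def)
  also have "\<dots> = (inverse ((x$2)^3))^2"
  proof -
    have "(x$2)^10 = (x$2)^2 * (x$2)^2 * ((x$2)^3)^2"
      by (simp flip: power_add power_mult)
    then show ?thesis using r by (simp add: field_simps)
  qed
  finally show ?thesis using r by simp
qed

lemma DERIV_h_diag:
  assumes r: "0 < r"
  shows "DERIV (\<lambda>r. h_diag r i) r :> h_diag_deriv r i"
proof -
  have "DERIV (\<lambda>r. inverse (r^10)) r :> - (real 10 * r^(10 - Suc 0) * inverse ((r^10)^Suc (Suc 0)))"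
    by (rule DERIV_inverse_fun[OF DERIV_pow]) (use r in simp)
  moreover have "(r^10)^Suc (Suc 0) = r^9 * r^11" by (simp flip: power_add power_mult)
  then have "- (real 10 * r^(10 - Suc 0) * inverse ((r^10)^Suc (Suc 0))) = -10 / r^11"
    using r by (simp add: field_simps)
  ultimately have "DERIV (\<lambda>r. inverse (r^10)) r :> -10 / r^11" by simp
  moreover have "DERIV (\<lambda>r. r^2) r :> 2 * r" by (auto intro!: derivative_eq_intros)
  ultimately show ?thesis
    unfolding h_diag_def h_diag_deriv_def using exhaust_4[of i] by auto
qed

lemma partial_h_metric:
  assumes x: "x \<in> N_dom"
  shows "partial N_dom i (\<lambda>y. h_metric y $ j $ l) x
           = (if i = 2 \<and> j = l then h_diag_deriv (x$2) j else 0)"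
proof -
  have "DERIV (\<lambda>r. if j = l then h_diag r j else 0) (x$2) :> (if j = l then h_diag_deriv (x$2) j else 0)"
    using x DERIV_h_diag[of "x$2" j] by (cases "j = l") (simp_all add: N_dom_def)
  from partial_N_dom_separable(1)[OF x _ DERIV_const this, of _ 1]
  show ?thesis by (simp add: h_metric_diagonal)
qed

lemma christoffel_h_metric:
  assumes x: "x \<in> N_dom"
  shows "christoffel N_dom h_metric x k i j = 1/2 * (inverse (h_diag (x$2) k) *
     ((if i = 2 \<and> j = k then h_diag_deriv (x$2) j else 0) + (if j = 2 \<and> i = k then h_diag_deriv (x$2) i else 0)
      - (if k = 2 \<and> i = j then h_diag_deriv (x$2) i else 0)))"
proof -
  have "0 < x$2" using x by (simp add: N_dom_def)
  then show ?thesis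
    unfolding christoffel_def partial_h_metric[OF x] matrix_inv_h_metric[OF \<open>0 < x$2\<close>]
    by (simp add: if_zero_mult)
qed

lemma christoffel_h_metric_quadratic:
  assumes x: "x \<in> N_dom" and w4: "w$4 = 0"
  shows "(\<Sum>i\<in>UNIV. \<Sum>j\<in>UNIV. christoffel N_dom h_metric x 1 i j * w$i * w$j) = 2 * w$1 * w$2 / x$2"
    "(\<Sum>i\<in>UNIV. \<Sum>j\<in>UNIV. christoffel N_dom h_metric x 2 i j * w$i * w$j) = - x$2 * ((w$1)^2 + (w$3)^2)"
    "(\<Sum>i\<in>UNIV. \<Sum>j\<in>UNIV. christoffel N_dom h_metric x 3 i j * w$i * w$j) = 2 * w$2 * w$3 / x$2"
    "(\<Sum>i\<in>UNIV. \<Sum>j\<in>UNIV. christoffel N_dom h_metric x 4 i j * w$i * w$j) = 0"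
proof -
  have r: "0 < x$2" using x by (simp add: N_dom_def)
  note simps = christoffel_h_metric[OF x] h_diag_def h_diag_deriv_def sum_4 w4
  show "(\<Sum>i\<in>UNIV. \<Sum>j\<in>UNIV. christoffel N_dom h_metric x 1 i j * w$i * w$j) = 2 * w$1 * w$2 / x$2"
    using r by (simp add: simps field_simps power2_eq_square)
  show "(\<Sum>i\<in>UNIV. \<Sum>j\<in>UNIV. christoffel N_dom h_metric x 2 i j * w$i * w$j) = - x$2 * ((w$1)^2 + (w$3)^2)"
    using r by (simp add: simps field_simps power2_eq_square)
  show "(\<Sum>i\<in>UNIV. \<Sum>j\<in>UNIV. christoffel N_dom h_metric x 3 i j * w$i * w$j) = 2 * w$2 * w$3 / x$2"
    using r by (simp add: simps field_simps power2_eq_square)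
  show "(\<Sum>i\<in>UNIV. \<Sum>j\<in>UNIV. christoffel N_dom h_metric x 4 i j * w$i * w$j) = 0"
    by (simp add: simps)
qed

section \<open>The lifted CH2 flow\<close>

locale CH2_flow =
  fixes T :: real and u \<rho> :: "real \<Rightarrow> real \<Rightarrow> real"
  assumes solution: "CH2_solution T u \<rho>"
begin

definition U :: "real^2 \<Rightarrow> real" where "U = (\<lambda>x. u (x$1) (x$2))"
definition R :: "real^2 \<Rightarrow> real" where "R = (\<lambda>x. \<rho> (x$1) (x$2))"

abbreviation dt :: "(real^2 \<Rightarrow> real) \<Rightarrow> real^2 \<Rightarrow> real" where "dt \<equiv> partial (CH2_dom T) 1"
abbreviation d\<theta> :: "(real^2 \<Rightarrow> real) \<Rightarrow> real^2 \<Rightarrow> real" where "d\<theta> \<equiv> partial (CH2_dom T) 2"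
abbreviation velocity :: "real \<Rightarrow> real^4 \<Rightarrow> real^4" where "velocity \<equiv> CH2_lift T u \<rho>"

lemma smooth_U: "smooth_on (CH2_dom T) U"
  and smooth_R: "smooth_on (CH2_dom T) R"
  using solution by (simp_all add: CH2_solution_def Let_def U_def R_def)

lemma space_periodic_U: "space_periodic T U"
  and space_periodic_R: "space_periodic T R"
  using solution by (auto simp: CH2_solution_def Let_def U_def R_def space_periodic_def CH2_dom_def axis_def)

lemma momentum_equation:
  assumes x: "x \<in> CH2_dom T"
  shows "dt U x - 1/4 * dt (d\<theta> (d\<theta> U)) x + U x * (d\<theta> U x - 1/4 * d\<theta> (d\<theta> (d\<theta> U)) x)
           + 2 * (U x - 1/4 * d\<theta> (d\<theta> U) x) * d\<theta> U x = - R x * d\<theta> R x"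
proof -
  have "smooth_on (CH2_dom T) (d\<theta> (d\<theta> U))" by (intro smooth_on_partial smooth_U)
  then have "partial (CH2_dom T) i (\<lambda>y. U y - 1/4 * d\<theta> (d\<theta> U) y) x
      = partial (CH2_dom T) i U x - 1/4 * partial (CH2_dom T) i (d\<theta> (d\<theta> U)) x" for i
    using x smooth_U by (intro partial_diff_scaled CH2_dom_line_nontrivial smooth_on_has_partial)
  moreover have "dt (\<lambda>y. U y - 1/4 * d\<theta> (d\<theta> U) y) x + U x * d\<theta> (\<lambda>y. U y - 1/4 * d\<theta> (d\<theta> U) y) x
      + 2 * (U x - 1/4 * d\<theta> (d\<theta> U) x) * d\<theta> U x = - R x * d\<theta> R x"
    using solution x unfolding CH2_solution_def Let_def U_def[symmetric] R_def[symmetric] by blast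
  ultimately show ?thesis by simp
qed

lemma mass_equation:
  assumes x: "x \<in> CH2_dom T"
  shows "dt R x + d\<theta> R x * U x + R x * d\<theta> U x = 0"
proof -
  have "d\<theta> (\<lambda>y. R y * U y) x = d\<theta> R x * U x + R x * d\<theta> U x"
    using x smooth_U smooth_R by (intro partial_mult CH2_dom_line_nontrivial smooth_on_has_partial)
  moreover have "dt R x + d\<theta> (\<lambda>y. R y * U y) x = 0"
    using solution x unfolding CH2_solution_def Let_def U_def[symmetric] R_def[symmetric] by blast
  ultimately show ?thesis by simp
qed

definition pressure_profile :: "real \<Rightarrow> real \<Rightarrow> real" where
  "pressure_profile t \<theta> = dt (d\<theta> U) (vector[t,\<theta>]) + U (vector[t,\<theta>]) * d\<theta> (d\<theta> U) (vector[t,\<theta>])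
     + 1/2 * (d\<theta> U (vector[t,\<theta>]))^2 - 2 * (U (vector[t,\<theta>]))^2 - 2 * (R (vector[t,\<theta>]))^2"

definition pressure :: "real \<Rightarrow> real^4 \<Rightarrow> real" where
  "pressure t y = (-1/4) * (y$2)^2 * pressure_profile t (y$1)"

lemma smooth_on_partials:
  "smooth_on (CH2_dom T) (d\<theta> U)" "smooth_on (CH2_dom T) (dt (d\<theta> U))" "smooth_on (CH2_dom T) (d\<theta> (d\<theta> U))"
  by (simp_all add: smooth_on_partial smooth_U)

lemma DERIV_pressure_profile:
  assumes t: "0 \<le> t" "t < T"
  shows "DERIV (pressure_profile t) \<theta> :> 4 * dt U (vector[t,\<theta>]) + 8 * U (vector[t,\<theta>]) * d\<theta> U (vector[t,\<theta>])"
proof -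
  let ?v = "vector[t,\<theta>]"
  have slice: "DERIV (\<lambda>\<tau>. F (vector[t,\<tau>])) \<theta> :> d\<theta> F ?v" if "smooth_on (CH2_dom T) F" for F
    using smooth_on_CH2_dom_DERIV_space[OF that t] .
  have "DERIV (pressure_profile t) \<theta> :> d\<theta> (dt (d\<theta> U)) ?v + d\<theta> U ?v * d\<theta> (d\<theta> U) ?v
       + U ?v * d\<theta> (d\<theta> (d\<theta> U)) ?v + d\<theta> U ?v * d\<theta> (d\<theta> U) ?v
       - 4 * U ?v * d\<theta> U ?v - 4 * R ?v * d\<theta> R ?v" (is "DERIV _ _ :> ?E")
    unfolding pressure_profile_def[abs_def]
    by (auto intro!: derivative_eq_intros slice smooth_on_partials smooth_U smooth_R simp: algebra_simps)
  moreover have "?E = 4 * dt U ?v + 8 * U ?v * d\<theta> U ?v"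
  proof -
    have "d\<theta> (dt (d\<theta> U)) ?v = dt (d\<theta> (d\<theta> U)) ?v"
      using partial_CH2_dom_commute[OF smooth_on_partials(1) t] .
    moreover have "?v \<in> CH2_dom T" using t by simp
    note momentum_equation[OF this]
    ultimately show ?thesis by (simp add: algebra_simps)
  qed
  ultimately show ?thesis by metis
qed

lemma smooth_pressure:
  assumes t: "0 \<le> t" "t < T"
  shows "smooth_on N_dom (pressure t)"
proof -
  have "smooth_real (pressure_profile t)"
    unfolding pressure_profile_def[abs_def] power2_eq_square
    using t smooth_U smooth_R smooth_on_partials
    by (intro smooth_real_add smooth_real_diff smooth_real_mult smooth_real_const smooth_real_space_slice) auto
  then show ?thesis
    unfolding pressure_def[abs_def] by (rule smooth_on_N_dom_separable)
qed

lemma pressure_periodic: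
  assumes t: "0 \<le> t" "t < T"
  shows "N_periodic (pressure t)"
proof -
  have v: "vector[t, \<theta> + 2*pi] = (vector[t,\<theta>] :: real^2) + (2*pi) *\<^sub>R axis 2 1" for \<theta>
    by (simp add: vector2_add_axis)
  have shift: "F (vector[t, \<theta> + 2*pi]) = F (vector[t,\<theta>])" if "space_periodic T F" for F \<theta>
    using that t unfolding v space_periodic_def by simp
  have "space_periodic T (d\<theta> U)" "space_periodic T (dt (d\<theta> U))" "space_periodic T (d\<theta> (d\<theta> U))"
    using space_periodic_U by (simp_all add: space_periodic_partial)
  note shifts = this[THEN shift] space_periodic_U[THEN shift] space_periodic_R[THEN shift]
  have "pressure_profile t (\<theta> + 2*pi) = pressure_profile t \<theta>" for \<theta>
    by (simp add: pressure_profile_def shifts)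
  then show ?thesis
    by (simp add: N_periodic_def pressure_def axis_def)
qed

lemma velocity_nth:
  "velocity s y $ 1 = U (vector[s, y$1])"
  "velocity s y $ 2 = y$2 / 2 * d\<theta> U (vector[s, y$1])"
  "velocity s y $ 3 = R (vector[s, y$1])"
  "velocity s y $ 4 = 0"
  by (simp_all add: CH2_lift_def U_def R_def)

lemma partial_velocity:
  assumes t: "0 \<le> t" "t < T" and x: "x \<in> N_dom"
  shows "partial N_dom i (\<lambda>y. velocity t y $ 1) x = (if i = 1 then d\<theta> U (vector[t, x$1]) else 0)"
    "partial N_dom i (\<lambda>y. velocity t y $ 2) x = (if i = 1 then x$2 / 2 * d\<theta> (d\<theta> U) (vector[t, x$1])
        else if i = 2 then d\<theta> U (vector[t, x$1]) / 2 else 0)"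
    "partial N_dom i (\<lambda>y. velocity t y $ 3) x = (if i = 1 then d\<theta> R (vector[t, x$1]) else 0)"
    "partial N_dom i (\<lambda>y. velocity t y $ 4) x = 0"
proof -
  note slice = smooth_on_CH2_dom_DERIV_space[OF _ t]
  have const: "DERIV (\<lambda>r. 1) (x$2) :> 0" and half: "DERIV (\<lambda>r. r / 2) (x$2) :> 1 / 2"
    by (auto intro!: derivative_eq_intros)
  show "partial N_dom i (\<lambda>y. velocity t y $ 1) x = (if i = 1 then d\<theta> U (vector[t, x$1]) else 0)"
    using partial_N_dom_separable(1)[OF x _ slice[OF smooth_U] const] by (simp add: velocity_nth)
  show "partial N_dom i (\<lambda>y. velocity t y $ 2) x = (if i = 1 then x$2 / 2 * d\<theta> (d\<theta> U) (vector[t, x$1])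
        else if i = 2 then d\<theta> U (vector[t, x$1]) / 2 else 0)"
    using partial_N_dom_separable(1)[OF x _ slice[OF smooth_on_partials(1)] half] by (simp add: velocity_nth)
  show "partial N_dom i (\<lambda>y. velocity t y $ 3) x = (if i = 1 then d\<theta> R (vector[t, x$1]) else 0)"
    using partial_N_dom_separable(1)[OF x _ slice[OF smooth_R] const] by (simp add: velocity_nth)
  show "partial N_dom i (\<lambda>y. velocity t y $ 4) x = 0"
    using partial_N_dom_separable(1)[OF x _ DERIV_const const, of _ 0] by (simp add: velocity_nth)
qed

lemma cov_deriv_velocity:
  assumes t: "0 \<le> t" "t < T" and x: "x \<in> N_dom"
  defines "v \<equiv> vector[t, x$1]"
  shows "cov_deriv N_dom h_metric (velocity t) (velocity t) x $ 1 = 2 * U v * d\<theta> U v"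
    "cov_deriv N_dom h_metric (velocity t) (velocity t) x $ 2
       = x$2 / 2 * U v * d\<theta> (d\<theta> U) v + x$2 / 4 * (d\<theta> U v)^2 - x$2 * ((U v)^2 + (R v)^2)"
    "cov_deriv N_dom h_metric (velocity t) (velocity t) x $ 3 = U v * d\<theta> R v + R v * d\<theta> U v"
    "cov_deriv N_dom h_metric (velocity t) (velocity t) x $ 4 = 0"
proof -
  have r: "0 < x$2" using x by (simp add: N_dom_def)
  have cov: "cov_deriv N_dom h_metric (velocity t) (velocity t) x $ k
      = (\<Sum>i\<in>UNIV. velocity t x $ i * partial N_dom i (\<lambda>y. velocity t y $ k) x)
        + (\<Sum>i\<in>UNIV. \<Sum>j\<in>UNIV. christoffel N_dom h_metric x k i j * velocity t x $ i * velocity t x $ j)"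
    for k by (simp add: cov_deriv_def)
  note \<Gamma> = christoffel_h_metric_quadratic[OF x velocity_nth(4)]
  note simps = velocity_nth v_def
  show "cov_deriv N_dom h_metric (velocity t) (velocity t) x $ 1 = 2 * U v * d\<theta> U v"
    unfolding cov \<Gamma> unfolding sum_4 partial_velocity[OF t x] using r by (simp add: simps)
  show "cov_deriv N_dom h_metric (velocity t) (velocity t) x $ 2
       = x$2 / 2 * U v * d\<theta> (d\<theta> U) v + x$2 / 4 * (d\<theta> U v)^2 - x$2 * ((U v)^2 + (R v)^2)"
    unfolding cov \<Gamma> unfolding sum_4 partial_velocity[OF t x] by (simp add: simps power2_eq_square algebra_simps)
  show "cov_deriv N_dom h_metric (velocity t) (velocity t) x $ 3 = U v * d\<theta> R v + R v * d\<theta> U v"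
    unfolding cov \<Gamma> unfolding sum_4 partial_velocity[OF t x] using r by (simp add: simps)
  show "cov_deriv N_dom h_metric (velocity t) (velocity t) x $ 4 = 0"
    unfolding cov \<Gamma> unfolding sum_4 partial_velocity[OF t x] by (simp add: simps)
qed

lemma grad_pressure:
  assumes t: "0 \<le> t" "t < T" and x: "x \<in> N_dom"
  defines "v \<equiv> vector[t, x$1]"
  shows "grad N_dom h_metric (pressure t) x $ 1 = - dt U v - 2 * U v * d\<theta> U v"
    "grad N_dom h_metric (pressure t) x $ 2 = - x$2 / 2 * pressure_profile t (x$1)"
    "grad N_dom h_metric (pressure t) x $ 3 = 0"
    "grad N_dom h_metric (pressure t) x $ 4 = 0"
proof -
  have r: "0 < x$2" using x by (simp add: N_dom_def)
  have "DERIV (\<lambda>r. (-1/4) * r^2) (x$2) :> (-1/4) * (2 * x$2)"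
    by (auto intro!: derivative_eq_intros)
  from partial_N_dom_separable(1)[OF x _ DERIV_pressure_profile[OF t] this]
  have dp: "partial N_dom i (pressure t) x = (if i = 1 then (-1/4) * (x$2)^2 * (4 * dt U v + 8 * U v * d\<theta> U v)
      else if i = 2 then (-1/4) * (2 * x$2) * pressure_profile t (x$1) else 0)" for i
    by (simp add: pressure_def v_def)
  have g: "grad N_dom h_metric (pressure t) x $ k = inverse (h_diag (x$2) k) * partial N_dom k (pressure t) x" for k
    using r by (simp add: grad_def matrix_inv_h_metric matrix_vector_mult_def if_zero_mult)
  show "grad N_dom h_metric (pressure t) x $ 1 = - dt U v - 2 * U v * d\<theta> U v"
    "grad N_dom h_metric (pressure t) x $ 2 = - x$2 / 2 * pressure_profile t (x$1)"
    "grad N_dom h_metric (pressure t) x $ 3 = 0"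
    "grad N_dom h_metric (pressure t) x $ 4 = 0"
    unfolding g dp using r by (simp_all add: h_diag_def field_simps)
qed

lemma has_real_derivative_velocity:
  fixes x :: "real^4"
  assumes t: "0 \<le> t" "t < T"
  defines "v \<equiv> vector[t, x$1]"
  shows "((\<lambda>s. velocity s x $ 1) has_real_derivative dt U v) (at t within {0..<T})"
    "((\<lambda>s. velocity s x $ 2) has_real_derivative x$2 / 2 * dt (d\<theta> U) v) (at t within {0..<T})"
    "((\<lambda>s. velocity s x $ 3) has_real_derivative dt R v) (at t within {0..<T})"
    "((\<lambda>s. velocity s x $ 4) has_real_derivative 0) (at t within {0..<T})"
  unfolding velocity_nth v_def
  by (rule smooth_on_CH2_dom_DERIV_time[OF smooth_U t],
      rule DERIV_cmult[OF smooth_on_CH2_dom_DERIV_time[OF smooth_on_partials(1) t]],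
      rule smooth_on_CH2_dom_DERIV_time[OF smooth_R t], rule DERIV_const)

lemma euler_equation:
  assumes t: "0 \<le> t" "t < T" and x: "x \<in> N_dom"
  shows "((\<lambda>s. velocity s x $ k) has_real_derivative
      - cov_deriv N_dom h_metric (velocity t) (velocity t) x $ k - grad N_dom h_metric (pressure t) x $ k)
      (at t within {0..<T})"
proof -
  let ?v = "vector[t, x$1] :: real^2"
  have "?v \<in> CH2_dom T" using t by simp
  note mass = mass_equation[OF this]
  note cov = cov_deriv_velocity[OF t x] and grad = grad_pressure[OF t x]
  consider "k = 1" | "k = 2" | "k = 3" | "k = 4" using exhaust_4 by blast
  then show ?thesis
  proof cases
    case 1
    have "- cov_deriv N_dom h_metric (velocity t) (velocity t) x $ 1 - grad N_dom h_metric (pressure t) x $ 1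
        = dt U ?v"
      unfolding cov grad by simp
    then show ?thesis unfolding 1 by (simp only: has_real_derivative_velocity(1)[OF t])
  next
    case 2
    have "- cov_deriv N_dom h_metric (velocity t) (velocity t) x $ 2 - grad N_dom h_metric (pressure t) x $ 2
        = x$2 / 2 * dt (d\<theta> U) ?v"
      unfolding cov grad pressure_profile_def by (simp add: algebra_simps)
    then show ?thesis unfolding 2 by (simp only: has_real_derivative_velocity(2)[OF t])
  next
    case 3
    have "- cov_deriv N_dom h_metric (velocity t) (velocity t) x $ 3 - grad N_dom h_metric (pressure t) x $ 3
        = dt R ?v"
      unfolding cov grad using mass by (simp add: algebra_simps)
    then show ?thesis unfolding 3 by (simp only: has_real_derivative_velocity(3)[OF t])
  next
    case 4
    have "- cov_deriv N_dom h_metric (velocity t) (velocity t) x $ 4 - grad N_dom h_metric (pressure t) x $ 4 = 0"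
      unfolding cov grad by simp
    then show ?thesis unfolding 4 by (simp only: has_real_derivative_velocity(4)[OF t])
  qed
qed

lemma divg_velocity:
  assumes t: "0 \<le> t" "t < T" and x: "x \<in> N_dom"
  shows "divg N_dom h_metric (velocity t) x = 0"
proof -
  let ?v = "vector[t, x$1] :: real^2"
  have r: "0 < x$2" using x by (simp add: N_dom_def)
  note slice = smooth_on_CH2_dom_DERIV_space[OF _ t]
  have vol: "sqrt (det (h_metric y)) = inverse ((y$2)^3)" if "y \<in> N_dom" for y
    using that by (simp add: N_dom_def sqrt_det_h_metric)
  have d3: "DERIV (\<lambda>r. inverse (r^3)) (x$2) :> - 3 * inverse ((x$2)^4)"
    using r by (auto intro!: derivative_eq_intros simp: field_simps eval_nat_numeral)
  have d2: "DERIV (\<lambda>r. inverse (r^2) / 2) (x$2) :> - inverse ((x$2)^3)"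
    using r by (auto intro!: derivative_eq_intros simp: field_simps eval_nat_numeral)
  have "partial N_dom 1 (\<lambda>y. sqrt (det (h_metric y)) * velocity t y $ 1) x = inverse ((x$2)^3) * d\<theta> U ?v"
    using partial_N_dom_separable(1)[OF x _ slice[OF smooth_U] d3] by (simp add: vol velocity_nth)
  moreover have "partial N_dom 2 (\<lambda>y. sqrt (det (h_metric y)) * velocity t y $ 2) x
      = - inverse ((x$2)^3) * d\<theta> U ?v"
  proof -
    have "sqrt (det (h_metric y)) * velocity t y $ 2 = inverse ((y$2)^2) / 2 * d\<theta> U (vector[t, y$1])"
      if "y \<in> N_dom" for y
      using that by (simp add: vol velocity_nth N_dom_def field_simps eval_nat_numeral)
    then show ?thesis
      using partial_N_dom_separable(1)[OF x _ slice[OF smooth_on_partials(1)] d2] by simp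
  qed
  moreover have "partial N_dom 3 (\<lambda>y. sqrt (det (h_metric y)) * velocity t y $ 3) x = 0"
    using partial_N_dom_separable(1)[OF x _ slice[OF smooth_R] d3] by (simp add: vol velocity_nth)
  moreover have "partial N_dom 4 (\<lambda>y. sqrt (det (h_metric y)) * velocity t y $ 4) x = 0"
    using partial_N_dom_separable(1)[OF x _ DERIV_const d3, of _ 0] by (simp add: velocity_nth)
  ultimately show ?thesis by (simp add: divg_def sum_4)
qed

end

theorem corollary4p2:
  fixes T :: real and u \<rho> :: "real \<Rightarrow> real \<Rightarrow> real"
  assumes "CH2_solution T u \<rho>"
  shows "\<exists>p :: real \<Rightarrow> real^4 \<Rightarrow> real.
     (\<forall>t\<in>{0..<T}. smooth_on N_dom (p t) \<and> N_periodic (p t)) \<and>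
     (\<forall>t\<in>{0..<T}. \<forall>x\<in>N_dom. \<forall>k.
        ((\<lambda>s. CH2_lift T u \<rho> s x $ k) has_real_derivative
            (- cov_deriv N_dom h_metric (CH2_lift T u \<rho> t) (CH2_lift T u \<rho> t) x $ k
             - grad N_dom h_metric (p t) x $ k)) (at t within {0..<T})) \<and>
     (\<forall>t\<in>{0..<T}. \<forall>x\<in>N_dom. divg N_dom h_metric (CH2_lift T u \<rho> t) x = 0)"
proof -
  interpret CH2_flow T u \<rho> by (rule CH2_flow.intro) (rule assms)
  show ?thesis
    using smooth_pressure pressure_periodic euler_equation divg_velocity
    by (intro exI[of _ pressure]) auto
qed

end
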